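(* Let $\Sigma$ be a set containing $0$, $(\Gamma,\oplus)$ an abelian group, and $f:\Sigma^n\to\Gamma$. Suppose $f(\bar x)=\bigoplus_{i=1}^k f_i(\bar x_{K_i})=\bigoplus_{j=1}^l g_j(\bar x_{L_j})$ for all $\bar x\in\Sigma^n$, where $\{K_1,\ldots,K_k\}$ and $\{L_1,\ldots,L_l\}$ are partitions of $[n]$ into nonempty sets and every $f_i$ and every $g_j$ has non-separable arguments. Then $\{K_1,\ldots,K_k\}=\{L_1,\ldots,L_l\}$ (so $k=l$), and whenever $K_i=L_j$ the function $f_i\ominus g_j$ is constant.
   Context: $[n]=\{1,\ldots,n\}$; for $M=\{i_1<\cdots<i_m\}\subseteq[n]$ and $\bar x=(x_1,\ldots,x_n)$, $\bar x_M=(x_{i_1},\ldots,x_{i_m})$. A function $h:\Sigma^m\to\Gamma$ has $P$-separable arguments (for a partition $P=\{P_1,\ldots,P_p\}$ of $[m]$ into nonempty sets) if there exist functions $h_j:\Sigma^{|P_j|}\to\Gamma$ with $h(\bar x)=h_1(\bar x_{P_1})\oplus\cdots\oplus h_p(\bar x_{P_p})$ for all $\bar x$; $h$ has non-separable arguments if $h$ has $P$-separable arguments only for the one-block partition $P=\{[m]\}$. *)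

theory Defs
  imports Main "HOL-Library.Disjoint_Sets"
begin

text \<open>Tuples in Sigma^m are lists of length m with entries in the carrier S.
  Coordinates are numbered 1..m.\<close>

definition tuples :: "'a set \<Rightarrow> nat \<Rightarrow> 'a list set" where
  "tuples S m = {xs. length xs = m \<and> set xs \<subseteq> S}"

definition restr :: "'a list \<Rightarrow> nat set \<Rightarrow> 'a list" where
  "restr xs M = map (\<lambda>i. xs ! (i - 1)) (sorted_list_of_set M)"

definition sep_args ::
  "'a set \<Rightarrow> nat \<Rightarrow> ('a list \<Rightarrow> 'g::comm_monoid_add) \<Rightarrow> nat set set \<Rightarrow> bool" where
  "sep_args S m h P \<longleftrightarrow> partition_on {1..m} P \<and>
     (\<exists>hs :: nat set \<Rightarrow> 'a list \<Rightarrow> 'g.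
        \<forall>xs \<in> tuples S m. h xs = (\<Sum>B\<in>P. hs B (restr xs B)))"

definition non_sep_args ::
  "'a set \<Rightarrow> nat \<Rightarrow> ('a list \<Rightarrow> 'g::comm_monoid_add) \<Rightarrow> bool" where
  "non_sep_args S m h \<longleftrightarrow> (\<forall>P. sep_args S m h P \<longrightarrow> P = {{1..m}})"

end

theory Submission
  imports Defs
begin

text \<open>Fix a block \<open>K\<^sub>0\<close> of \<open>K\<close> and freeze every coordinate outside \<open>K\<^sub>0\<close> to \<open>z\<close>.
  In the first decomposition only the component on \<open>K\<^sub>0\<close> still varies, so \<open>F\<close> becomes that
  component up to a constant. In the second decomposition each \<open>g\<^sub>j\<close> now only reads the
  coordinates in \<open>L\<^sub>j \<inter> K\<^sub>0\<close>, so the component on \<open>K\<^sub>0\<close> has separable arguments for the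
  trace of \<open>L\<close> on \<open>K\<^sub>0\<close>. By non-separability this trace is trivial, i.e. \<open>K\<^sub>0\<close> lies inside
  a block of \<open>L\<close>. By symmetry each partition refines the other, so they coincide, and freezing
  the complement of a common block shows that \<open>f\<^sub>i\<close> and \<open>g\<^sub>j\<close> both agree with \<open>F\<close> there up
  to constants.\<close>

lemma length_restr [simp]: "finite B \<Longrightarrow> length (restr xs B) = card B"
  by (simp add: restr_def)

lemma nth_restr: "k < card B \<Longrightarrow> restr xs B ! k = xs ! (sorted_list_of_set B ! k - 1)"
  by (simp add: restr_def)

lemma restr_eq_iff:
  "finite B \<Longrightarrow> restr xs B = restr xs' B \<longleftrightarrow> (\<forall>i\<in>B. xs ! (i - 1) = xs' ! (i - 1))"
  by (simp add: restr_def)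

lemma bij_betw_sorted_list_of_set_nth:
  assumes "finite K"
  shows "bij_betw (\<lambda>k. sorted_list_of_set K ! (k - 1)) {1..card K} K"
proof -
  have "bij_betw (\<lambda>k. k - 1) {1..card K} {..<card K}"
    by (rule bij_betw_byWitness[where f' = Suc]) auto
  moreover have "bij_betw ((!) (sorted_list_of_set K)) {..<card K} K"
    using assms by (intro bij_betw_nth) auto
  ultimately show ?thesis
    by (auto dest: bij_betw_trans simp: comp_def)
qed

definition rank :: "nat set \<Rightarrow> nat \<Rightarrow> nat" where
  "rank K = the_inv_into {1..card K} (\<lambda>k. sorted_list_of_set K ! (k - 1))"

lemma bij_betw_rank: "finite K \<Longrightarrow> bij_betw (rank K) K {1..card K}"
  unfolding rank_def by (intro bij_betw_the_inv_into bij_betw_sorted_list_of_set_nth)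

lemma rank_sorted_list_of_set_nth:
  assumes "finite K" "k < card K"
  shows "rank K (sorted_list_of_set K ! k) = Suc k"
proof -
  have "inj_on (\<lambda>k. sorted_list_of_set K ! (k - 1)) {1..card K}"
    using bij_betw_sorted_list_of_set_nth[OF assms(1)] by (rule bij_betw_imp_inj_on)
  from the_inv_into_f_f[OF this, of "Suc k"] show ?thesis
    using assms(2) by (simp add: rank_def)
qed

definition embed :: "nat \<Rightarrow> 'a \<Rightarrow> nat set \<Rightarrow> 'a list \<Rightarrow> 'a list" where
  "embed n z K ys = map (\<lambda>i. if i \<in> K then ys ! (rank K i - 1) else z) [1..<n+1]"

lemma length_embed [simp]: "length (embed n z K ys) = n"
  by (simp add: embed_def)

lemma nth_embed:
  "i \<in> {1..n} \<Longrightarrow> embed n z K ys ! (i - 1) = (if i \<in> K then ys ! (rank K i - 1) else z)"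
  by (auto simp: embed_def simp del: upt_Suc)

lemma embed_in_tuples:
  assumes "finite K" "ys \<in> tuples S (card K)" "z \<in> S"
  shows "embed n z K ys \<in> tuples S n"
proof -
  have "ys ! (rank K i - 1) \<in> S" if "i \<in> K" for i
  proof -
    have "rank K i \<in> {1..card K}"
      using bij_betw_apply[OF bij_betw_rank[OF assms(1)] that] .
    then have "ys ! (rank K i - 1) \<in> set ys"
      using assms(2) by (intro nth_mem) (auto simp: tuples_def)
    then show ?thesis
      using assms(2) by (auto simp: tuples_def)
  qed
  then show ?thesis
    using assms(3) by (auto simp: tuples_def embed_def)
qed

lemma restr_embed_self:
  assumes "K \<subseteq> {1..n}" "length ys = card K"
  shows "restr (embed n z K ys) K = ys"
proof (rule nth_equalityI)
  have K: "finite K"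
    using assms(1) finite_subset by blast
  then show "length (restr (embed n z K ys) K) = length ys"
    using assms(2) by simp
  fix k assume "k < length (restr (embed n z K ys) K)"
  then have k: "k < card K"
    using K by simp
  let ?i = "sorted_list_of_set K ! k"
  have i: "?i \<in> K"
    using K k by (metis length_sorted_list_of_set nth_mem set_sorted_list_of_set)
  have "restr (embed n z K ys) K ! k = embed n z K ys ! (?i - 1)"
    using k by (rule nth_restr)
  also have "\<dots> = ys ! (rank K ?i - 1)"
    using i assms(1) by (subst nth_embed) auto
  also have "\<dots> = ys ! k"
    by (simp add: rank_sorted_list_of_set_nth[OF K k])
  finally show "restr (embed n z K ys) K ! k = ys ! k" .
qed

lemma restr_embed_disjoint:
  assumes "B \<subseteq> {1..n}" "B \<inter> K = {}"
  shows "restr (embed n z K ys) B = replicate (card B) z"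
proof (rule nth_equalityI)
  have B: "finite B"
    using assms(1) finite_subset by blast
  then show "length (restr (embed n z K ys) B) = length (replicate (card B) z)"
    by simp
  fix k assume "k < length (restr (embed n z K ys) B)"
  then have k: "k < card B"
    using B by simp
  let ?i = "sorted_list_of_set B ! k"
  have "?i \<in> B"
    using B k by (metis length_sorted_list_of_set nth_mem set_sorted_list_of_set)
  then have "embed n z K ys ! (?i - 1) = z"
    using assms by (subst nth_embed) auto
  then show "restr (embed n z K ys) B ! k = replicate (card B) z ! k"
    using k by (simp add: nth_restr)
qed

lemma restr_embed_eq:
  assumes "B \<subseteq> {1..n}" and "\<forall>j\<in>rank K ` (B \<inter> K). ys ! (j - 1) = ys' ! (j - 1)"
  shows "restr (embed n z K ys) B = restr (embed n z K ys') B"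
proof -
  have "embed n z K ys ! (i - 1) = embed n z K ys' ! (i - 1)" if i: "i \<in> B" for i
  proof -
    have "i \<in> {1..n}"
      using assms(1) i by blast
    then show ?thesis
      unfolding nth_embed[OF \<open>i \<in> {1..n}\<close>] using assms(2) i by auto
  qed
  moreover have "finite B"
    using assms(1) finite_subset by blast
  ultimately show ?thesis
    by (simp add: restr_eq_iff)
qed

lemma embed_block_decomposition:
  fixes F :: "'a list \<Rightarrow> 'g::comm_monoid_add"
  assumes z: "z \<in> S" and K: "partition_on {1..n} K" and K0: "K0 \<in> K"
    and F_K: "\<forall>xs \<in> tuples S n. F xs = (\<Sum>B\<in>K. f B (restr xs B))"
    and ys: "ys \<in> tuples S (card K0)"
  shows "F (embed n z K0 ys) = f K0 ys + (\<Sum>B\<in>K - {K0}. f B (replicate (card B) z))"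
proof -
  have blocks: "B \<subseteq> {1..n}" if "B \<in> K" for B
    using partition_onD1[OF K] that by blast
  have "length ys = card K0"
    using ys by (simp add: tuples_def)
  have "finite K0"
    using blocks[OF K0] finite_subset by blast
  then have "F (embed n z K0 ys) = (\<Sum>B\<in>K. f B (restr (embed n z K0 ys) B))"
    using F_K embed_in_tuples[OF _ ys z] by blast
  also have "\<dots> = f K0 (restr (embed n z K0 ys) K0)
      + (\<Sum>B\<in>K - {K0}. f B (restr (embed n z K0 ys) B))"
    using finite_elements[OF finite_atLeastAtMost K] K0 by (rule sum.remove)
  also have "restr (embed n z K0 ys) K0 = ys"
    using blocks[OF K0] \<open>length ys = card K0\<close> by (rule restr_embed_self)
  also have "(\<Sum>B\<in>K - {K0}. f B (restr (embed n z K0 ys) B))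
      = (\<Sum>B\<in>K - {K0}. f B (replicate (card B) z))"
  proof (rule sum.cong)
    fix B assume B: "B \<in> K - {K0}"
    then have "B \<inter> K0 = {}"
      using disjointD[OF partition_onD2[OF K] _ K0] by blast
    then show "f B (restr (embed n z K0 ys) B) = f B (replicate (card B) z)"
      using blocks B by (simp add: restr_embed_disjoint)
  qed simp
  finally show ?thesis .
qed

text \<open>Group the terms by block; the additive constant goes into an arbitrary block, which is
  why \<open>P\<close> must be nonempty.\<close>

lemma sep_args_if_sum_of_local_terms:
  fixes h :: "'a list \<Rightarrow> 'g::comm_monoid_add" and \<phi> :: "'i \<Rightarrow> 'a list \<Rightarrow> 'g"
  assumes P: "partition_on {1..m} P" "P \<noteq> {}" and I: "finite I"
    and in_block: "\<forall>i\<in>I. \<exists>C\<in>P. D i \<subseteq> C"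
    and dep: "\<forall>i\<in>I. \<forall>ys\<in>tuples S m. \<forall>ys'\<in>tuples S m.
                (\<forall>j\<in>D i. ys ! (j - 1) = ys' ! (j - 1)) \<longrightarrow> \<phi> i ys = \<phi> i ys'"
    and h: "\<forall>ys\<in>tuples S m. h ys = (\<Sum>i\<in>I. \<phi> i ys) + c"
  shows "sep_args S m h P"
proof -
  obtain C0 where C0: "C0 \<in> P"
    using P(2) by blast
  have finP: "finite P"
    using P(1) by (rule finite_elements[rotated]) simp
  have finC: "finite C" if "C \<in> P" for C
  proof -
    have "C \<subseteq> {1..m}"
      using partition_onD1[OF P(1)] that by blast
    then show ?thesis
      by (rule finite_subset) simp
  qed
  define \<kappa> where "\<kappa> i = (SOME C. C \<in> P \<and> D i \<subseteq> C)" for i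
  have \<kappa>: "\<kappa> i \<in> P" "D i \<subseteq> \<kappa> i" if "i \<in> I" for i
  proof -
    have "\<exists>C. C \<in> P \<and> D i \<subseteq> C"
      using in_block that by blast
    from someI_ex[OF this] show "\<kappa> i \<in> P" "D i \<subseteq> \<kappa> i"
      unfolding \<kappa>_def by auto
  qed
  define ext where "ext C ws = (SOME ys. ys \<in> tuples S m \<and> restr ys C = ws)" for C ws
  define hs where "hs C ws = (\<Sum>i\<in>{i\<in>I. \<kappa> i = C}. \<phi> i (ext C ws)) + (if C = C0 then c else 0)"
    for C ws
  have "h ys = (\<Sum>C\<in>P. hs C (restr ys C))" if ys: "ys \<in> tuples S m" for ys
  proof -
    have ext_eq: "\<phi> i (ext C (restr ys C)) = \<phi> i ys" if i: "i \<in> I" "\<kappa> i = C" for i C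
    proof -
      let ?ys' = "ext C (restr ys C)"
      have "?ys' \<in> tuples S m \<and> restr ?ys' C = restr ys C"
        unfolding ext_def by (rule someI[of _ ys]) (use ys in blast)
      then have "?ys' \<in> tuples S m" "\<forall>j\<in>C. ?ys' ! (j - 1) = ys ! (j - 1)"
        using finC \<kappa>(1) i by (auto simp: restr_eq_iff)
      then show ?thesis
        using dep i ys \<kappa>(2)[OF i(1)] by blast
    qed
    have "(\<Sum>C\<in>P. hs C (restr ys C))
        = (\<Sum>C\<in>P. (\<Sum>i\<in>{i\<in>I. \<kappa> i = C}. \<phi> i ys) + (if C = C0 then c else 0))"
      unfolding hs_def by (intro sum.cong refl arg_cong2[where f = "(+)"]) (auto simp: ext_eq)
    also have "\<dots> = (\<Sum>i\<in>I. \<phi> i ys) + c"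
      using sum.group[OF I finP, of \<kappa> "\<lambda>i. \<phi> i ys"] \<kappa>(1) finP C0
      by (simp add: sum.distrib image_subset_iff)
    finally show ?thesis
      using h ys by simp
  qed
  then show ?thesis
    using P(1) unfolding sep_args_def by blast
qed

definition induced_partition :: "nat set \<Rightarrow> nat set set \<Rightarrow> nat set set" where
  "induced_partition K L = (`) (rank K) ` ((\<inter>) K ` L - {{}}) - {{}}"

lemma partition_on_induced_partition:
  assumes L: "partition_on A L" and K: "K \<subseteq> A" "finite K"
  shows "partition_on {1..card K} (induced_partition K L)"
proof -
  have r: "inj_on (rank K) K" "rank K ` K = {1..card K}"
    using bij_betw_rank[OF K(2)] by (auto simp: bij_betw_def)
  have "partition_on K ((\<inter>) K ` L - {{}})"
    using partition_on_restrict[OF L, of K] K(1) by (simp add: Int_absorb2)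
  from partition_on_inj_image[OF this r(1)] show ?thesis
    using r(2) by (simp add: induced_partition_def)
qed

lemma sep_args_induced_partition:
  fixes F :: "'a list \<Rightarrow> 'g::ab_group_add"
  assumes z: "z \<in> S"
    and K: "partition_on {1..n} K" and L: "partition_on {1..n} L" and K0: "K0 \<in> K"
    and F_K: "\<forall>xs \<in> tuples S n. F xs = (\<Sum>B\<in>K. f B (restr xs B))"
    and F_L: "\<forall>xs \<in> tuples S n. F xs = (\<Sum>B\<in>L. g B (restr xs B))"
  shows "sep_args S (card K0) (f K0) (induced_partition K0 L)"
proof -
  let ?P = "induced_partition K0 L"
  have K0_sub: "K0 \<subseteq> {1..n}"
    using partition_onD1[OF K] K0 by blast
  have L_sub: "B \<subseteq> {1..n}" if "B \<in> L" for B
    using partition_onD1[OF L] that by blast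
  have fin: "finite K0"
    using K0_sub by (rule finite_subset) simp
  have P: "partition_on {1..card K0} ?P"
    using L K0_sub fin by (rule partition_on_induced_partition)
  have "K0 \<noteq> {}"
    using partition_onD3[OF K] K0 by blast
  then have "card K0 \<ge> 1"
    using fin by (simp add: Suc_le_eq card_gt_0_iff)
  then have "?P \<noteq> {}"
    using partition_onD1[OF P] by auto
  have in_block: "\<forall>B\<in>L. \<exists>C\<in>?P. rank K0 ` (B \<inter> K0) \<subseteq> C"
  proof
    fix B assume "B \<in> L"
    show "\<exists>C\<in>?P. rank K0 ` (B \<inter> K0) \<subseteq> C"
    proof (cases "B \<inter> K0 = {}")
      case True
      then show ?thesis
        using \<open>?P \<noteq> {}\<close> by auto
    next
      case False
      then have "rank K0 ` (B \<inter> K0) \<in> ?P"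
        using \<open>B \<in> L\<close> by (auto simp: induced_partition_def Int_commute)
      then show ?thesis
        by blast
    qed
  qed
  have dep: "\<forall>B\<in>L. \<forall>ys\<in>tuples S (card K0). \<forall>ys'\<in>tuples S (card K0).
      (\<forall>j\<in>rank K0 ` (B \<inter> K0). ys ! (j - 1) = ys' ! (j - 1)) \<longrightarrow>
      g B (restr (embed n z K0 ys) B) = g B (restr (embed n z K0 ys') B)"
    using L_sub restr_embed_eq by metis
  define c where "c = (\<Sum>B\<in>K - {K0}. f B (replicate (card B) z))"
  have "\<forall>ys\<in>tuples S (card K0). f K0 ys = (\<Sum>B\<in>L. g B (restr (embed n z K0 ys) B)) + - c"
  proof
    fix ys assume ys: "ys \<in> tuples S (card K0)"
    have "f K0 ys + c = F (embed n z K0 ys)"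
      using embed_block_decomposition[OF z K K0 F_K ys] by (simp add: c_def)
    also have "\<dots> = (\<Sum>B\<in>L. g B (restr (embed n z K0 ys) B))"
      using F_L embed_in_tuples[OF fin ys z] by simp
    finally show "f K0 ys = (\<Sum>B\<in>L. g B (restr (embed n z K0 ys) B)) + - c"
      by (simp add: algebra_simps)
  qed
  then show ?thesis
    by (rule sep_args_if_sum_of_local_terms[OF P \<open>?P \<noteq> {}\<close>
          finite_elements[OF finite_atLeastAtMost L] in_block dep])
qed

lemma refines_if_non_sep_args:
  fixes F :: "'a list \<Rightarrow> 'g::ab_group_add"
  assumes z: "z \<in> S"
    and K: "partition_on {1..n} K" and L: "partition_on {1..n} L"
    and F_K: "\<forall>xs \<in> tuples S n. F xs = (\<Sum>B\<in>K. f B (restr xs B))"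
    and F_L: "\<forall>xs \<in> tuples S n. F xs = (\<Sum>B\<in>L. g B (restr xs B))"
    and non_sep: "\<forall>B\<in>K. non_sep_args S (card B) (f B)"
  shows "refines {1..n} K L"
  unfolding refines_def
proof (intro conjI K L ballI)
  fix K0 assume K0: "K0 \<in> K"
  have "K0 \<subseteq> {1..n}"
    using partition_onD1[OF K] K0 by blast
  then have "finite K0"
    by (rule finite_subset) simp
  then have r: "inj_on (rank K0) K0" "rank K0 ` K0 = {1..card K0}"
    using bij_betw_rank by (auto simp: bij_betw_def)
  have "induced_partition K0 L = {{1..card K0}}"
    using sep_args_induced_partition[OF z K L K0 F_K F_L] non_sep K0
    by (simp add: non_sep_args_def)
  then have "{1..card K0} \<in> induced_partition K0 L"
    by simp
  then obtain B where "B \<in> L" "rank K0 ` (K0 \<inter> B) = rank K0 ` K0"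
    unfolding induced_partition_def r(2)[symmetric] by blast
  then have "K0 \<inter> B = K0"
    using inj_on_image_eq_iff[OF r(1)] by blast
  then show "\<exists>B'\<in>L. K0 \<subseteq> B'"
    using \<open>B \<in> L\<close> by blast
qed

theorem lemmaA4:
  fixes S :: "'a set" and z :: 'a and n :: nat
    and F :: "'a list \<Rightarrow> 'g::ab_group_add"
    and K L :: "nat set set"
    and f g :: "nat set \<Rightarrow> 'a list \<Rightarrow> 'g"
  assumes "z \<in> S"
    and "partition_on {1..n} K" and "partition_on {1..n} L"
    and "\<forall>xs \<in> tuples S n. F xs = (\<Sum>B\<in>K. f B (restr xs B))"
    and "\<forall>xs \<in> tuples S n. F xs = (\<Sum>B\<in>L. g B (restr xs B))"
    and "\<forall>B\<in>K. non_sep_args S (card B) (f B)"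
    and "\<forall>B\<in>L. non_sep_args S (card B) (g B)"
  shows "K = L \<and>
    (\<forall>B\<in>K. \<exists>c. \<forall>ys \<in> tuples S (card B). f B ys - g B ys = c)"
proof
  show "K = L"
    using refines_asym[OF refines_if_non_sep_args[OF assms(1-6)]
        refines_if_non_sep_args[OF assms(1,3,2,5,4,7)]] .
  show "\<forall>B\<in>K. \<exists>c. \<forall>ys \<in> tuples S (card B). f B ys - g B ys = c"
  proof
    fix B assume "B \<in> K"
    with \<open>K = L\<close> have "B \<in> L"
      by simp
    have "f B ys - g B ys = (\<Sum>C\<in>L - {B}. g C (replicate (card C) z))
                          - (\<Sum>C\<in>K - {B}. f C (replicate (card C) z))"
      if "ys \<in> tuples S (card B)" for ys
      using embed_block_decomposition[OF assms(1,2) \<open>B \<in> K\<close> assms(4) that]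
        embed_block_decomposition[OF assms(1,3) \<open>B \<in> L\<close> assms(5) that]
      by (simp add: algebra_simps)
    then show "\<exists>c. \<forall>ys \<in> tuples S (card B). f B ys - g B ys = c"
      by blast
  qed
qed

end
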